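(* Let $\mathcal{A}=\{A_1,\dots,A_m\}$ be a bimodal collection of pairwise disjoint nonempty subsets of a finite abelian group $G$, with internal difference groups $H_1,\dots,H_m$, labelled so that $|A_i|<|H_i|$ exactly for $i=1,\dots,r$, where $r\ge2$. Let $D=(a_1+H_1)\setminus A_1$, where $a_1+H_1$ is the coset of $H_1$ containing $A_1$, and suppose $\mathcal{A}$ is in canonical position, i.e. $D$ is a subgroup of $G$. Let $A=A_1\cup\dots\cup A_m$ and $H=H_1+H_2+\dots+H_r$. If $A\setminus H$ is nonempty, then $A\setminus H$ is a union of cosets of $H$, and the sets $A_i$ lying in $A\setminus H$ arise from a subdivision of these cosets of $H$: they partition $A\setminus H$ and each of them is contained in a single coset of $H$.
   Context: $G$ is written additively. The internal difference group $H_i$ of $A_i$ is the subgroup generated by all $x-y$ with $x,y\in A_i$; $A_i$ lies in a single coset of $H_i$ and $|A_i|\le|H_i|$. A collection $\{A_1,\dots,A_m\}$ of pairwise disjoint subsets of $G$ is bimodal if for every $i$ and every $\delta\in G\setminus\{0\}$, the number $N_i(\delta)$ of pairs $(a,b)$ with $a\in A_i$, $b\in A_j$ for some $j\neq i$, and $a-b=\delta$, satisfies $N_i(\delta)\in\{0,|A_i|\}$. (For such collections with $r\ge2$ the set $D$ equals $(a_i+H_i)\setminus A_i$ for every $i\le r$ and is a coset of a subgroup; canonical position means the collection has been translated so that $D$ is a subgroup.) *)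

theory Defs
  imports Main
begin

definition is_subgroup :: "'a::ab_group_add set \<Rightarrow> bool" where
  "is_subgroup K \<longleftrightarrow> 0 \<in> K \<and> (\<forall>x\<in>K. \<forall>y\<in>K. x - y \<in> K)"

definition gen_subgroup :: "'a::ab_group_add set \<Rightarrow> 'a set" where
  "gen_subgroup X = \<Inter>{K. is_subgroup K \<and> X \<subseteq> K}"

definition diff_group :: "'a::ab_group_add set \<Rightarrow> 'a set" where
  "diff_group S = gen_subgroup {x - y | x y. x \<in> S \<and> y \<in> S}"

definition N_count :: "nat \<Rightarrow> (nat \<Rightarrow> 'a::ab_group_add set) \<Rightarrow> nat \<Rightarrow> 'a \<Rightarrow> nat" where
  "N_count m A i \<delta> = card {(a, b). a \<in> A i \<and> (\<exists>j\<in>{1..m}. j \<noteq> i \<and> b \<in> A j) \<and> a - b = \<delta>}"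

definition bimodal :: "nat \<Rightarrow> (nat \<Rightarrow> 'a::ab_group_add set) \<Rightarrow> bool" where
  "bimodal m A \<longleftrightarrow> (\<forall>i\<in>{1..m}. \<forall>\<delta>. \<delta> \<noteq> 0 \<longrightarrow> N_count m A i \<delta> \<in> {0, card (A i)})"

definition sumset_family :: "nat \<Rightarrow> (nat \<Rightarrow> 'a::ab_group_add set) \<Rightarrow> 'a set" where
  "sumset_family r H = {(\<Sum>i\<in>{1..r}. f i) | f. \<forall>i\<in>{1..r}. f i \<in> H i}"

end

theory Submission
  imports Defs
begin

text \<open>
  Write B_i for the union of the sets A_j with j \<noteq> i. Bimodality says precisely that
  B_i + H_i = B_i. Canonical position gives 0 \<notin> A and A_1 \<subseteq> H_1. For k \<le> r this forces
  A_k \<subseteq> H_k: otherwise H_k misses A, hence H_k \<subseteq> H_1, so the coset of H_k through A_k lies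
  in B_1 \<subseteq> A, and a point of it outside A_k would translate back into B_k. Consequently
  A - H is invariant under every H_k with k \<le> r, i.e. under H. For j > r the set A_j is a
  full coset of H_j, so H_j stabilises all of A; an element of H_j outside H would then
  lie in A - H and hence in A, which with 0 \<notin> A is impossible. So every A_i lies in a
  single coset of H, and A - H is the union of those A_i that it contains.
\<close>

lemma is_subgroup_zero: "is_subgroup K \<Longrightarrow> 0 \<in> K"
  by (simp add: is_subgroup_def)

lemma is_subgroup_diff: "is_subgroup K \<Longrightarrow> x \<in> K \<Longrightarrow> y \<in> K \<Longrightarrow> x - y \<in> K"
  by (simp add: is_subgroup_def)

lemma is_subgroup_uminus: "is_subgroup K \<Longrightarrow> x \<in> K \<Longrightarrow> - x \<in> K"
  using is_subgroup_diff[of K 0 x] is_subgroup_zero[of K] by simp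

lemma is_subgroup_add: "is_subgroup K \<Longrightarrow> x \<in> K \<Longrightarrow> y \<in> K \<Longrightarrow> x + y \<in> K"
  using is_subgroup_diff[of K x "- y"] is_subgroup_uminus[of K y] by simp

lemma is_subgroup_add_iff: "is_subgroup K \<Longrightarrow> h \<in> K \<Longrightarrow> x + h \<in> K \<longleftrightarrow> x \<in> K"
  using is_subgroup_add[of K x h] is_subgroup_diff[of K "x + h" h] by auto

lemma is_subgroup_sum: "is_subgroup K \<Longrightarrow> (\<And>i. i \<in> I \<Longrightarrow> f i \<in> K) \<Longrightarrow> sum f I \<in> K"
  by (induction I rule: infinite_finite_induct) (auto simp: is_subgroup_zero is_subgroup_add)

lemma is_subgroup_gen_subgroup: "is_subgroup (gen_subgroup X)"
  unfolding gen_subgroup_def is_subgroup_def by auto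

lemma gen_subgroup_least: "is_subgroup K \<Longrightarrow> X \<subseteq> K \<Longrightarrow> gen_subgroup X \<subseteq> K"
  unfolding gen_subgroup_def by auto

lemma gen_subgroup_superset: "X \<subseteq> gen_subgroup X"
  unfolding gen_subgroup_def by auto

lemma is_subgroup_diff_group: "is_subgroup (diff_group S)"
  unfolding diff_group_def by (rule is_subgroup_gen_subgroup)

lemma diff_mem_diff_group: "x \<in> S \<Longrightarrow> y \<in> S \<Longrightarrow> x - y \<in> diff_group S"
  unfolding diff_group_def by (rule subsetD[OF gen_subgroup_superset]) blast

lemma subset_coset_diff_group: "x \<in> S \<Longrightarrow> S \<subseteq> (\<lambda>h. x + h) ` diff_group S"
  by (force intro: image_eqI[of _ _ "_ - x"] diff_mem_diff_group)

lemma subset_diff_group_if_mem: "x \<in> S \<Longrightarrow> x \<in> diff_group S \<Longrightarrow> S \<subseteq> diff_group S"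
  using subset_coset_diff_group[of x S] is_subgroup_add[OF is_subgroup_diff_group, of x] by auto

lemma coset_diff_group_eq_iff_card:
  assumes "finite (diff_group S)" and "x \<in> S"
  shows "S = (\<lambda>h. x + h) ` diff_group S \<longleftrightarrow> card (diff_group S) \<le> card S"
proof -
  have "card ((\<lambda>h. x + h) ` diff_group S) = card (diff_group S)"
    by (simp add: card_image)
  then show ?thesis
    using subset_coset_diff_group[OF assms(2)] assms(1)
    by (metis card_seteq finite_imageI order_refl)
qed

definition stabilizer :: "'a::ab_group_add set \<Rightarrow> 'a set" where
  "stabilizer X = {h. \<forall>x. x \<in> X \<longleftrightarrow> x + h \<in> X}"

lemma stabilizer_add_iff: "h \<in> stabilizer X \<Longrightarrow> x + h \<in> X \<longleftrightarrow> x \<in> X"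
  unfolding stabilizer_def by blast

lemma is_subgroup_stabilizer: "is_subgroup (stabilizer X)"
proof -
  have "x + (h - g) \<in> X \<longleftrightarrow> x \<in> X" if "h \<in> stabilizer X" "g \<in> stabilizer X" for h g x
    using stabilizer_add_iff[OF that(1), of x] stabilizer_add_iff[OF that(2), of "x + (h - g)"]
    by (simp add: algebra_simps)
  then show ?thesis
    unfolding is_subgroup_def by (auto simp: stabilizer_def)
qed

lemma subset_stabilizer_if_add_mem:
  assumes "is_subgroup K" and "\<And>x h. x \<in> X \<Longrightarrow> h \<in> K \<Longrightarrow> x + h \<in> X"
  shows "K \<subseteq> stabilizer X"
proof
  fix h assume h: "h \<in> K"
  have "x \<in> X" if "x + h \<in> X" for x
    using assms(2)[OF that is_subgroup_uminus[OF assms(1) h]] by simp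
  then show "h \<in> stabilizer X"
    unfolding stabilizer_def using assms(2) h by blast
qed

lemma subgroup_subset_stabilizer_coset:
  "is_subgroup K \<Longrightarrow> K \<subseteq> stabilizer ((\<lambda>h. c + h) ` K)"
  by (rule subset_stabilizer_if_add_mem)
    (auto simp: add.assoc intro: is_subgroup_add)

lemma stabilizer_Un: "stabilizer X \<inter> stabilizer Y \<subseteq> stabilizer (X \<union> Y)"
  unfolding stabilizer_def by auto

lemma stabilizer_notin_if_zero_notin: "h \<in> stabilizer X \<Longrightarrow> 0 \<notin> X \<Longrightarrow> h \<notin> X"
  using stabilizer_add_iff[of h X 0] by simp

lemma diff_group_subset_stabilizer:
  assumes "\<And>x a a'. x \<in> X \<Longrightarrow> a \<in> S \<Longrightarrow> a' \<in> S \<Longrightarrow> x + (a' - a) \<in> X"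
  shows "diff_group S \<subseteq> stabilizer X"
  unfolding diff_group_def
proof (rule gen_subgroup_least[OF is_subgroup_stabilizer], safe)
  fix a a' assume "a \<in> S" "a' \<in> S"
  have "x \<in> X \<longleftrightarrow> x + (a' - a) \<in> X" for x
  proof
    show "x \<in> X \<Longrightarrow> x + (a' - a) \<in> X"
      using assms \<open>a \<in> S\<close> \<open>a' \<in> S\<close> by blast
    show "x \<in> X" if "x + (a' - a) \<in> X"
      using assms[OF that \<open>a' \<in> S\<close> \<open>a \<in> S\<close>] by simp
  qed
  then show "a' - a \<in> stabilizer X"
    unfolding stabilizer_def by simp
qed

lemma coset_subset_if_subset_stabilizer:
  "K \<subseteq> stabilizer X \<Longrightarrow> x \<in> X \<Longrightarrow> (\<lambda>h. x + h) ` K \<subseteq> X"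
  using stabilizer_add_iff by blast

lemma Union_cosets_eq_if_subset_stabilizer:
  assumes "is_subgroup K" and "K \<subseteq> stabilizer X"
  shows "X = \<Union>{(\<lambda>h. x + h) ` K | x. x \<in> X}"
proof
  show "X \<subseteq> \<Union>{(\<lambda>h. x + h) ` K | x. x \<in> X}"
  proof
    fix x assume "x \<in> X"
    moreover have "x \<in> (\<lambda>h. x + h) ` K"
      using is_subgroup_zero[OF assms(1)] by (intro image_eqI[of _ _ 0]) simp_all
    ultimately show "x \<in> \<Union>{(\<lambda>h. x + h) ` K | x. x \<in> X}"
      by blast
  qed
  show "\<Union>{(\<lambda>h. x + h) ` K | x. x \<in> X} \<subseteq> X"
    using coset_subset_if_subset_stabilizer[OF assms(2)] by blast
qed

lemma sumset_family_subset_subgroup: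
  "is_subgroup K \<Longrightarrow> (\<And>i. i \<in> {1..r} \<Longrightarrow> H i \<subseteq> K) \<Longrightarrow> sumset_family r H \<subseteq> K"
  unfolding sumset_family_def by (blast intro: is_subgroup_sum)

lemma is_subgroup_sumset_family:
  assumes "\<And>i. i \<in> {1..r} \<Longrightarrow> is_subgroup (H i)"
  shows "is_subgroup (sumset_family r H)"
  unfolding is_subgroup_def sumset_family_def
proof (safe intro!: CollectI)
  have "\<forall>i\<in>{1..r}. 0 \<in> H i"
    using assms is_subgroup_zero by blast
  then show "\<exists>f. 0 = sum f {1..r} \<and> (\<forall>i\<in>{1..r}. f i \<in> H i)"
    by (intro exI[of _ "\<lambda>_. 0"]) simp
next
  fix f g assume f: "\<forall>i\<in>{1..r}. f i \<in> H i" and g: "\<forall>i\<in>{1..r}. g i \<in> H i"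
  have "\<forall>i\<in>{1..r}. f i - g i \<in> H i"
    using assms is_subgroup_diff f g by blast
  then show "\<exists>d. sum f {1..r} - sum g {1..r} = sum d {1..r} \<and> (\<forall>i\<in>{1..r}. d i \<in> H i)"
    by (intro exI[of _ "\<lambda>i. f i - g i"]) (simp add: sum_subtractf)
qed

lemma subset_sumset_family:
  assumes "\<And>i. i \<in> {1..r} \<Longrightarrow> is_subgroup (H i)" and "k \<in> {1..r}"
  shows "H k \<subseteq> sumset_family r H"
proof
  fix h assume "h \<in> H k"
  moreover have "\<forall>i\<in>{1..r}. 0 \<in> H i"
    using assms(1) is_subgroup_zero by blast
  ultimately have "h = (\<Sum>i\<in>{1..r}. if i = k then h else 0) \<and> (\<forall>i\<in>{1..r}. (if i = k then h else 0) \<in> H i)"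
    using assms(2) by simp
  then show "h \<in> sumset_family r H"
    unfolding sumset_family_def by blast
qed

definition others :: "nat \<Rightarrow> (nat \<Rightarrow> 'a set) \<Rightarrow> nat \<Rightarrow> 'a set" where
  "others m A i = (\<Union>j\<in>{1..m} - {i}. A j)"

lemma N_count_eq_card_pairs:
  "N_count m A i \<delta> = card {(a, b). a \<in> A i \<and> b \<in> others m A i \<and> a - b = \<delta>}"
  unfolding N_count_def others_def by (intro arg_cong[where f = card]) auto

lemma bimodal_add_diff_mem_others:
  assumes bim: "bimodal m A" and i: "i \<in> {1..m}" and fin: "finite (A i)"
    and disj: "A i \<inter> others m A i = {}"
    and x: "x \<in> others m A i" and a: "a \<in> A i" and a': "a' \<in> A i"
  shows "x + (a' - a) \<in> others m A i"
proof -
  \<comment> \<open>The pairs counted by N_i(\<delta>) have distinct first coordinates; as (a, x) is one of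
    them, bimodality makes every a' \<in> A_i the first coordinate of such a pair.\<close>
  define \<delta> where "\<delta> = a - x"
  define P where "P = {(y, z). y \<in> A i \<and> z \<in> others m A i \<and> y - z = \<delta>}"
  have "\<delta> \<noteq> 0"
    using disj a x unfolding \<delta>_def by auto
  then have "N_count m A i \<delta> \<in> {0, card (A i)}"
    using bim i unfolding bimodal_def by blast
  then have N: "card P \<in> {0, card (A i)}"
    unfolding P_def N_count_eq_card_pairs .
  have inj: "inj_on fst P" and fst_P: "fst ` P \<subseteq> A i"
    unfolding inj_on_def P_def by auto
  then have "finite P"
    using fin finite_subset by (blast dest: finite_imageD)
  moreover have "(a, x) \<in> P"
    using a x unfolding P_def \<delta>_def by simp
  ultimately have "card (fst ` P) = card (A i)"
    using N card_image[OF inj] by auto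
  then have "fst ` P = A i"
    using card_subset_eq[OF fin fst_P] by simp
  with a' obtain b where "(a', b) \<in> P"
    by force
  then show ?thesis
    unfolding P_def \<delta>_def by (simp add: algebra_simps)
qed

lemma bimodal_diff_group_subset_stabilizer:
  assumes "bimodal m A" and "i \<in> {1..m}" and "finite (A i)"
    and "A i \<inter> others m A i = {}"
  shows "diff_group (A i) \<subseteq> stabilizer (others m A i)"
  using bimodal_add_diff_mem_others[OF assms] by (rule diff_group_subset_stabilizer)

locale canonical_bimodal =
  fixes A :: "nat \<Rightarrow> 'a::{ab_group_add, finite} set" and m r :: nat and a1 :: 'a
  assumes disjoint: "\<And>i j. i \<in> {1..m} \<Longrightarrow> j \<in> {1..m} \<Longrightarrow> i \<noteq> j \<Longrightarrow> A i \<inter> A j = {}"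
    and nonempty: "\<And>i. i \<in> {1..m} \<Longrightarrow> A i \<noteq> {}"
    and bimodal: "bimodal m A"
    and two_le_r: "2 \<le> r" and r_le_m: "r \<le> m"
    and small_iff: "\<And>i. i \<in> {1..m} \<Longrightarrow> card (A i) < card (diff_group (A i)) \<longleftrightarrow> i \<le> r"
    and a1_mem: "a1 \<in> A 1"
    and canonical: "is_subgroup ((\<lambda>h. a1 + h) ` diff_group (A 1) - A 1)"
begin

abbreviation H :: "nat \<Rightarrow> 'a set" where
  "H i \<equiv> diff_group (A i)"

abbreviation B :: "nat \<Rightarrow> 'a set" where
  "B \<equiv> others m A"

definition A_union :: "'a set" where
  "A_union = (\<Union>i\<in>{1..m}. A i)"

definition Hsum :: "'a set" where
  "Hsum = sumset_family r (\<lambda>i. H i)"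

definition outside :: "'a set" where
  "outside = A_union - Hsum"

lemma one_mem: "1 \<in> {1..m}"
  using two_le_r r_le_m by simp

lemma A_union_eq: "i \<in> {1..m} \<Longrightarrow> A_union = A i \<union> B i"
  unfolding A_union_def others_def by auto

lemma others_subset_A_union: "B i \<subseteq> A_union"
  unfolding A_union_def others_def by auto

lemma mem_others: "j \<in> {1..m} \<Longrightarrow> j \<noteq> i \<Longrightarrow> x \<in> A j \<Longrightarrow> x \<in> B i"
  unfolding others_def by auto

lemma A_disjoint_others: "i \<in> {1..m} \<Longrightarrow> A i \<inter> B i = {}"
  unfolding others_def using disjoint by blast

lemma H_subset_stabilizer_others: "i \<in> {1..m} \<Longrightarrow> H i \<subseteq> stabilizer (B i)"
  by (rule bimodal_diff_group_subset_stabilizer[OF bimodal _ finite A_disjoint_others])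

lemma a1_mem_H1: "a1 \<in> H 1" and zero_notin_A1: "0 \<notin> A 1"
proof -
  have "0 \<in> (\<lambda>h. a1 + h) ` H 1 - A 1"
    using is_subgroup_zero[OF canonical] .
  then obtain h where "h \<in> H 1" "a1 = - h" and "0 \<notin> A 1"
    by (auto simp: eq_neg_iff_add_eq_0)
  then show "a1 \<in> H 1" "0 \<notin> A 1"
    using is_subgroup_uminus[OF is_subgroup_diff_group] by auto
qed

lemma A1_subset_H1: "A 1 \<subseteq> H 1"
  using subset_diff_group_if_mem[OF a1_mem a1_mem_H1] .

lemma zero_notin_A_union: "0 \<notin> A_union"
proof
  assume "0 \<in> A_union"
  then have "0 \<in> B 1"
    using A_union_eq[OF one_mem] zero_notin_A1 by blast
  then have "0 + a1 \<in> B 1"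
    using stabilizer_add_iff H_subset_stabilizer_others[OF one_mem] a1_mem_H1 by blast
  then show False
    using A_disjoint_others[OF one_mem] a1_mem by auto
qed

lemma A_subset_H_if_meets:
  assumes k: "k \<in> {1..m}" and h: "h \<in> H k" "h \<in> A_union"
  shows "A k \<subseteq> H k"
proof (cases "h \<in> A k")
  case True
  then show ?thesis
    using subset_diff_group_if_mem h by blast
next
  case False
  then have "h \<in> B k"
    using h A_union_eq[OF k] by blast
  then show ?thesis
    using stabilizer_notin_if_zero_notin H_subset_stabilizer_others[OF k] h(1)
      others_subset_A_union zero_notin_A_union by blast
qed

lemma H_subset_H1_if_avoids:
  assumes k: "k \<in> {1..m}" "k \<noteq> 1" and avoids: "H k \<inter> A_union = {}"
  shows "H k \<subseteq> H 1"
proof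
  fix h assume h: "h \<in> H k"
  have "a1 \<in> B k"
    using mem_others[OF one_mem] k a1_mem by auto
  then have "a1 + h \<in> A_union"
    using H_subset_stabilizer_others[OF k(1)] h stabilizer_add_iff others_subset_A_union
    by (metis add.commute subsetD)
  moreover have "a1 + h \<notin> B 1"
  proof
    assume "a1 + h \<in> B 1"
    then have "h \<in> B 1"
      using H_subset_stabilizer_others[OF one_mem] a1_mem_H1 stabilizer_add_iff
      by (metis add.commute subsetD)
    then show False
      using avoids h others_subset_A_union by blast
  qed
  ultimately have "a1 + h \<in> H 1"
    using A_union_eq[OF one_mem] A1_subset_H1 by blast
  then show "h \<in> H 1"
    using is_subgroup_add_iff[OF is_subgroup_diff_group a1_mem_H1]
    by (metis add.commute)
qed

lemma A_subset_H:
  assumes k: "k \<in> {1..r}"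
  shows "A k \<subseteq> H k"
proof (rule ccontr)
  assume not_subset: "\<not> A k \<subseteq> H k"
  have km: "k \<in> {1..m}" and "k \<noteq> 1"
    using k r_le_m not_subset A1_subset_H1 by auto
  then have "H k \<subseteq> H 1"
    using H_subset_H1_if_avoids A_subset_H_if_meets not_subset by blast
  then have H_stab: "H k \<subseteq> stabilizer (B 1)"
    using H_subset_stabilizer_others[OF one_mem] by blast
  obtain ak where ak: "ak \<in> A k"
    using nonempty[OF km] by blast
  have "card (A k) < card (H k)"
    using small_iff[OF km] k by simp
  then obtain h where h: "h \<in> H k" "ak + h \<notin> A k"
    using coset_diff_group_eq_iff_card[OF finite ak] subset_coset_diff_group[OF ak] by auto
  have "ak \<in> B 1"
    using mem_others[OF km \<open>k \<noteq> 1\<close> ak] .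
  then have "ak + h \<in> A_union"
    using H_stab h(1) stabilizer_add_iff others_subset_A_union by blast
  then have "ak + h \<in> B k"
    using h(2) A_union_eq[OF km] by blast
  then have "ak \<in> B k"
    using H_subset_stabilizer_others[OF km] h(1) stabilizer_add_iff by blast
  then show False
    using A_disjoint_others[OF km] ak by blast
qed

lemma is_subgroup_Hsum: "is_subgroup Hsum"
  unfolding Hsum_def by (rule is_subgroup_sumset_family) (rule is_subgroup_diff_group)

lemma H_subset_Hsum_if_le: "k \<in> {1..r} \<Longrightarrow> H k \<subseteq> Hsum"
  unfolding Hsum_def by (rule subset_sumset_family) (rule is_subgroup_diff_group)

lemma a1_mem_Hsum: "a1 \<in> Hsum"
  using a1_mem_H1 H_subset_Hsum_if_le[of 1] two_le_r by auto

lemma Hsum_subset_stabilizer_outside: "Hsum \<subseteq> stabilizer outside"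
  unfolding Hsum_def
proof (rule sumset_family_subset_subgroup[OF is_subgroup_stabilizer])
  fix k assume k: "k \<in> {1..r}"
  then have km: "k \<in> {1..m}"
    using r_le_m by simp
  show "H k \<subseteq> stabilizer outside"
  proof (rule subset_stabilizer_if_add_mem[OF is_subgroup_diff_group])
    fix x h assume x: "x \<in> outside" and h: "h \<in> H k"
    then have "x \<notin> A k"
      using A_subset_H[OF k] H_subset_Hsum_if_le[OF k] unfolding outside_def by blast
    then have "x \<in> B k"
      using x A_union_eq[OF km] unfolding outside_def by blast
    then have "x + h \<in> A_union"
      using stabilizer_add_iff[of h "B k" x] H_subset_stabilizer_others[OF km] h
        others_subset_A_union by blast
    moreover have "x + h \<notin> Hsum"
      using x is_subgroup_add_iff[OF is_subgroup_Hsum, of h x] H_subset_Hsum_if_le[OF k] h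
      unfolding outside_def by blast
    ultimately show "x + h \<in> outside"
      unfolding outside_def by blast
  qed
qed

lemma H_subset_Hsum:
  assumes j: "j \<in> {1..m}"
  shows "H j \<subseteq> Hsum"
proof (cases "j \<le> r")
  case True
  then show ?thesis
    using H_subset_Hsum_if_le j by simp
next
  case False
  obtain aj where aj: "aj \<in> A j"
    using nonempty[OF j] by blast
  have coset: "A j = (\<lambda>h. aj + h) ` H j"
    using small_iff[OF j] False coset_diff_group_eq_iff_card[OF finite aj] by simp
  have "H j \<subseteq> stabilizer (A j)"
    using subgroup_subset_stabilizer_coset[OF is_subgroup_diff_group, of "A j" aj]
    by (simp only: coset[symmetric])
  then have H_stab: "H j \<subseteq> stabilizer A_union"
    using H_subset_stabilizer_others[OF j] stabilizer_Un[of "A j" "B j"]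
    unfolding A_union_eq[OF j] by blast
  show ?thesis
  proof
    fix h assume h: "h \<in> H j"
    show "h \<in> Hsum"
    proof (rule ccontr)
      assume "h \<notin> Hsum"
      then have "a1 + h \<notin> Hsum"
        using is_subgroup_add_iff[OF is_subgroup_Hsum a1_mem_Hsum] by (metis add.commute)
      moreover have "a1 \<in> A_union"
        using a1_mem one_mem unfolding A_union_def by blast
      then have "a1 + h \<in> A_union"
        using stabilizer_add_iff[of h A_union a1] H_stab h by blast
      ultimately have "a1 + h \<in> outside"
        unfolding outside_def by blast
      then have "h \<in> outside"
        using stabilizer_add_iff[of a1 outside h] Hsum_subset_stabilizer_outside a1_mem_Hsum
        by (simp add: add.commute subsetD)
      then show False
        using stabilizer_notin_if_zero_notin H_stab h zero_notin_A_union
        unfolding outside_def by blast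
    qed
  qed
qed

lemma A_subset_coset_Hsum:
  assumes "i \<in> {1..m}" and "x \<in> A i"
  shows "A i \<subseteq> (\<lambda>h. x + h) ` Hsum"
proof -
  have "A i \<subseteq> (\<lambda>h. x + h) ` H i"
    using subset_coset_diff_group[OF assms(2)] .
  also have "\<dots> \<subseteq> (\<lambda>h. x + h) ` Hsum"
    using H_subset_Hsum[OF assms(1)] by (rule image_mono)
  finally show ?thesis .
qed

lemma A_subset_some_coset_Hsum:
  assumes "i \<in> {1..m}"
  shows "\<exists>x. A i \<subseteq> (\<lambda>h. x + h) ` Hsum"
proof -
  obtain x where "x \<in> A i"
    using nonempty[OF assms] by blast
  then show ?thesis
    using A_subset_coset_Hsum[OF assms] by blast
qed

lemma outside_eq_Union_cosets: "outside = \<Union>{(\<lambda>h. x + h) ` Hsum | x. x \<in> outside}"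
  using Union_cosets_eq_if_subset_stabilizer[OF is_subgroup_Hsum Hsum_subset_stabilizer_outside] .

lemma Union_A_inside_outside: "(\<Union>i\<in>{i\<in>{1..m}. A i \<subseteq> outside}. A i) = outside"
proof
  show "outside \<subseteq> (\<Union>i\<in>{i\<in>{1..m}. A i \<subseteq> outside}. A i)"
  proof
    fix x assume x: "x \<in> outside"
    then obtain j where j: "j \<in> {1..m}" "x \<in> A j"
      unfolding outside_def A_union_def by blast
    have "A j \<subseteq> outside"
      using A_subset_coset_Hsum[OF j]
        coset_subset_if_subset_stabilizer[OF Hsum_subset_stabilizer_outside x] by blast
    then show "x \<in> (\<Union>i\<in>{i\<in>{1..m}. A i \<subseteq> outside}. A i)"
      using j by blast
  qed
qed blast

end

theorem proposition3p9:
  fixes A :: "nat \<Rightarrow> 'a::{ab_group_add, finite} set"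
    and m r :: nat and a1 :: 'a
  assumes disj: "\<forall>i\<in>{1..m}. \<forall>j\<in>{1..m}. i \<noteq> j \<longrightarrow> A i \<inter> A j = {}"
    and nonempty: "\<forall>i\<in>{1..m}. A i \<noteq> {}"
    and bim: "bimodal m A"
    and r_ge: "2 \<le> r" and r_le: "r \<le> m"
    and label: "\<forall>i\<in>{1..m}. (card (A i) < card (diff_group (A i)) \<longleftrightarrow> i \<le> r)"
    and a1: "a1 \<in> A 1"
    and canon: "is_subgroup ((\<lambda>h. a1 + h) ` diff_group (A 1) - A 1)"
    and ne: "(\<Union>i\<in>{1..m}. A i) - sumset_family r (\<lambda>i. diff_group (A i)) \<noteq> {}"
  shows "(let H = sumset_family r (\<lambda>i. diff_group (A i));
              U = (\<Union>i\<in>{1..m}. A i) - H;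
              I = {i\<in>{1..m}. A i \<subseteq> U}
          in U = \<Union>{(\<lambda>h. x + h) ` H | x. x \<in> U}
             \<and> (\<Union>i\<in>I. A i) = U
             \<and> (\<forall>i\<in>I. \<forall>j\<in>I. i \<noteq> j \<longrightarrow> A i \<inter> A j = {})
             \<and> (\<forall>i\<in>I. \<exists>x. A i \<subseteq> (\<lambda>h. x + h) ` H))"
proof -
  interpret canonical_bimodal A m r a1
    using disj nonempty bim r_ge r_le label a1 canon by unfold_locales auto
  have "outside = \<Union>{(\<lambda>h. x + h) ` Hsum | x. x \<in> outside}"
    and "(\<Union>i\<in>{i\<in>{1..m}. A i \<subseteq> outside}. A i) = outside"
    and "\<forall>i\<in>{i\<in>{1..m}. A i \<subseteq> outside}. \<exists>x. A i \<subseteq> (\<lambda>h. x + h) ` Hsum"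
    using outside_eq_Union_cosets Union_A_inside_outside A_subset_some_coset_Hsum by auto
  moreover have "\<forall>i\<in>{i\<in>{1..m}. A i \<subseteq> outside}. \<forall>j\<in>{i\<in>{1..m}. A i \<subseteq> outside}.
      i \<noteq> j \<longrightarrow> A i \<inter> A j = {}"
    using disj by blast
  ultimately show ?thesis
    unfolding Let_def A_union_def[symmetric] Hsum_def[symmetric] outside_def[symmetric]
    by (intro conjI)
qed

end
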